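(* If $(S,P)$ is a $\Gamma$-contraction, then $(S,P,0)$ is a $\Gamma_3$-contraction.
   Context: $\Gamma=\{(z_1+z_2,z_1z_2):|z_i|\le1\}\subset\mathbb C^2$ and $\Gamma_3=\{(z_1+z_2+z_3,\,z_1z_2+z_2z_3+z_3z_1,\,z_1z_2z_3):|z_i|\le1\}\subset\mathbb C^3$. A commuting tuple $T$ of bounded Hilbert space operators is a $\Gamma$-contraction (resp. $\Gamma_3$-contraction) if its Taylor joint spectrum lies in $\Gamma$ (resp. $\Gamma_3$) and $\|f(T)\|\le\sup|f|$ over that set for every rational function $f$ with poles off that set. *)

theory Defs
  imports "HOL-Analysis.Analysis"
begin

text \<open>HOL-Analysis only has real inner product spaces, so we introduce complex
Hilbert spaces: a real Banach space with a compatible complex scalar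
multiplication and a complex inner product (antilinear in the first slot)
inducing the norm.\<close>

class chilbert_space = banach +
  fixes cscale :: "complex \<Rightarrow> 'a \<Rightarrow> 'a"
    and cinner :: "'a \<Rightarrow> 'a \<Rightarrow> complex"
  assumes cscale_of_real: "cscale (complex_of_real r) x = scaleR r x"
    and cscale_add_right: "cscale a (x + y) = cscale a x + cscale a y"
    and cscale_add_left: "cscale (a + b) x = cscale a x + cscale b x"
    and cscale_cscale: "cscale a (cscale b x) = cscale (a * b) x"
    and cinner_conj: "cinner x y = cnj (cinner y x)"
    and cinner_add_left: "cinner (x + y) z = cinner x z + cinner y z"
    and cinner_cscale_left: "cinner (cscale a x) y = cnj a * cinner x y"
    and norm_eq_cinner: "complex_of_real ((norm x)\<^sup>2) = cinner x x"

definition bounded_clinear :: "('a::chilbert_space \<Rightarrow> 'a) \<Rightarrow> bool" where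
  "bounded_clinear A \<longleftrightarrow> bounded_linear A \<and> (\<forall>c x. A (cscale c x) = cscale c (A x))"

definition shift_op :: "('a::chilbert_space \<Rightarrow> 'a) \<Rightarrow> complex \<Rightarrow> 'a \<Rightarrow> 'a" where
  "shift_op A l = (\<lambda>x. A x - cscale l x)"

text \<open>Koszul complex of a commuting pair (A,B):
  0 -> H -> H^2 -> H -> 0, with d0 x = (A x, B x), d1 (x,y) = B x - A y.\<close>

definition koszul_exact2 :: "('a::chilbert_space \<Rightarrow> 'a) \<Rightarrow> ('a \<Rightarrow> 'a) \<Rightarrow> bool" where
  "koszul_exact2 A B \<longleftrightarrow>
     (\<forall>x. A x = 0 \<and> B x = 0 \<longrightarrow> x = 0) \<and>
     (\<forall>x y. B x - A y = 0 \<longrightarrow> (\<exists>u. x = A u \<and> y = B u)) \<and>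
     (\<forall>z. \<exists>x y. B x - A y = z)"

text \<open>Koszul complex of a commuting triple (A,B,C):
  0 -> H -> H^3 -> H^3 -> H -> 0, with
  d0 x = (A x, B x, C x),
  d1 (x,y,z) = (B x - A y, C x - A z, C y - B z),
  d2 (u,v,w) = C u - B v + A w.\<close>

definition koszul_exact3 ::
  "('a::chilbert_space \<Rightarrow> 'a) \<Rightarrow> ('a \<Rightarrow> 'a) \<Rightarrow> ('a \<Rightarrow> 'a) \<Rightarrow> bool" where
  "koszul_exact3 A B C \<longleftrightarrow>
     (\<forall>x. A x = 0 \<and> B x = 0 \<and> C x = 0 \<longrightarrow> x = 0) \<and>
     (\<forall>x y z. B x - A y = 0 \<and> C x - A z = 0 \<and> C y - B z = 0 \<longrightarrow>
        (\<exists>u. x = A u \<and> y = B u \<and> z = C u)) \<and>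
     (\<forall>u v w. C u - B v + A w = 0 \<longrightarrow>
        (\<exists>x y z. u = B x - A y \<and> v = C x - A z \<and> w = C y - B z)) \<and>
     (\<forall>h. \<exists>u v w. C u - B v + A w = h)"

definition taylor_spectrum2 ::
  "('a::chilbert_space \<Rightarrow> 'a) \<Rightarrow> ('a \<Rightarrow> 'a) \<Rightarrow> (complex \<times> complex) set" where
  "taylor_spectrum2 A B =
     {(l1, l2). \<not> koszul_exact2 (shift_op A l1) (shift_op B l2)}"

definition taylor_spectrum3 ::
  "('a::chilbert_space \<Rightarrow> 'a) \<Rightarrow> ('a \<Rightarrow> 'a) \<Rightarrow> ('a \<Rightarrow> 'a) \<Rightarrow> (complex \<times> complex \<times> complex) set" where
  "taylor_spectrum3 A B C =
     {(l1, l2, l3). \<not> koszul_exact3 (shift_op A l1) (shift_op B l2) (shift_op C l3)}"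

text \<open>A polynomial is given by a finitely supported coefficient function on
multi-indices.\<close>

definition poly2 :: "(nat \<times> nat \<Rightarrow> complex) \<Rightarrow> complex \<times> complex \<Rightarrow> complex" where
  "poly2 c z = (\<Sum>k\<in>{k. c k \<noteq> 0}. c k * fst z ^ fst k * snd z ^ snd k)"

definition poly3 :: "(nat \<times> nat \<times> nat \<Rightarrow> complex) \<Rightarrow> complex \<times> complex \<times> complex \<Rightarrow> complex" where
  "poly3 c z = (\<Sum>k\<in>{k. c k \<noteq> 0}.
      c k * fst z ^ fst k * fst (snd z) ^ fst (snd k) * snd (snd z) ^ snd (snd k))"

definition opoly2 ::
  "(nat \<times> nat \<Rightarrow> complex) \<Rightarrow> ('a::chilbert_space \<Rightarrow> 'a) \<Rightarrow> ('a \<Rightarrow> 'a) \<Rightarrow> 'a \<Rightarrow> 'a" where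
  "opoly2 c A B = (\<lambda>x. \<Sum>k\<in>{k. c k \<noteq> 0}. cscale (c k) ((A ^^ fst k) ((B ^^ snd k) x)))"

definition opoly3 ::
  "(nat \<times> nat \<times> nat \<Rightarrow> complex) \<Rightarrow> ('a::chilbert_space \<Rightarrow> 'a) \<Rightarrow> ('a \<Rightarrow> 'a) \<Rightarrow> ('a \<Rightarrow> 'a)
     \<Rightarrow> 'a \<Rightarrow> 'a" where
  "opoly3 c A B C = (\<lambda>x. \<Sum>k\<in>{k. c k \<noteq> 0}.
      cscale (c k) ((A ^^ fst k) ((B ^^ fst (snd k)) ((C ^^ snd (snd k)) x))))"

definition Gamma2 :: "(complex \<times> complex) set" where
  "Gamma2 = {(z1 + z2, z1 * z2) | z1 z2. cmod z1 \<le> 1 \<and> cmod z2 \<le> 1}"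

definition Gamma3 :: "(complex \<times> complex \<times> complex) set" where
  "Gamma3 = {(z1 + z2 + z3, z1 * z2 + z2 * z3 + z3 * z1, z1 * z2 * z3) | z1 z2 z3.
               cmod z1 \<le> 1 \<and> cmod z2 \<le> 1 \<and> cmod z3 \<le> 1}"

text \<open>For a rational function f = p/q with q nonvanishing on the set, f(T) is
p(T) q(T)^{-1}; we require the norm bound for the (unique) inverse of q(T).\<close>

definition gamma_contraction :: "('a::chilbert_space \<Rightarrow> 'a) \<Rightarrow> ('a \<Rightarrow> 'a) \<Rightarrow> bool" where
  "gamma_contraction S P \<longleftrightarrow>
     bounded_clinear S \<and> bounded_clinear P \<and> S \<circ> P = P \<circ> S \<and>
     taylor_spectrum2 S P \<subseteq> Gamma2 \<and>
     (\<forall>p q. finite {k. p k \<noteq> 0} \<and> finite {k. q k \<noteq> 0} \<and>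
            (\<forall>z\<in>Gamma2. poly2 q z \<noteq> 0) \<longrightarrow>
        (\<forall>R. R \<circ> opoly2 q S P = id \<and> opoly2 q S P \<circ> R = id \<longrightarrow>
           onorm (opoly2 p S P \<circ> R) \<le> (SUP z\<in>Gamma2. cmod (poly2 p z / poly2 q z))))"

definition gamma3_contraction ::
  "('a::chilbert_space \<Rightarrow> 'a) \<Rightarrow> ('a \<Rightarrow> 'a) \<Rightarrow> ('a \<Rightarrow> 'a) \<Rightarrow> bool" where
  "gamma3_contraction A B C \<longleftrightarrow>
     bounded_clinear A \<and> bounded_clinear B \<and> bounded_clinear C \<and>
     A \<circ> B = B \<circ> A \<and> A \<circ> C = C \<circ> A \<and> B \<circ> C = C \<circ> B \<and>
     taylor_spectrum3 A B C \<subseteq> Gamma3 \<and>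
     (\<forall>p q. finite {k. p k \<noteq> 0} \<and> finite {k. q k \<noteq> 0} \<and>
            (\<forall>z\<in>Gamma3. poly3 q z \<noteq> 0) \<longrightarrow>
        (\<forall>R. R \<circ> opoly3 q A B C = id \<and> opoly3 q A B C \<circ> R = id \<longrightarrow>
           onorm (opoly3 p A B C \<circ> R) \<le> (SUP z\<in>Gamma3. cmod (poly3 p z / poly3 q z))))"

end

theory Submission
  imports Defs
begin

text \<open>Since the third operator is zero, every polynomial in \<open>(S, P, 0)\<close> is a polynomial in
\<open>(S, P)\<close> alone, and \<open>\<Gamma>\<close> sits inside \<open>\<Gamma>\<^sub>3\<close> as the slice \<open>{(s, p, 0)}\<close>; so the von Neumann
inequality over \<open>\<Gamma>\<^sub>3\<close> follows from the one over \<open>\<Gamma>\<close>, the supremum only growing. For the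
spectrum, a point \<open>(l\<^sub>1, l\<^sub>2, l\<^sub>3)\<close> with \<open>l\<^sub>3 \<noteq> 0\<close> is never in it, because \<open>0 - l\<^sub>3\<close> is
invertible and commutes with everything, which makes the Koszul complex exact; for \<open>l\<^sub>3 = 0\<close>
exactness of the three-variable Koszul complex reduces to that of the two-variable one.\<close>

lemma linear_cscale: "linear (cscale c :: 'a::chilbert_space \<Rightarrow> 'a)"
proof
  fix r and x y :: 'a
  show "cscale c (x + y) = cscale c x + cscale c y" by (rule cscale_add_right)
  have "cscale c (r *\<^sub>R x) = cscale (c * of_real r) x" by (simp flip: cscale_of_real add: cscale_cscale)
  also have "\<dots> = r *\<^sub>R cscale c x" by (simp flip: cscale_of_real add: cscale_cscale mult.commute)
  finally show "cscale c (r *\<^sub>R x) = r *\<^sub>R cscale c x" .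
qed

lemma cscale_one [simp]: "cscale 1 (x::'a::chilbert_space) = x"
  using cscale_of_real[of 1 x] by simp

lemma cscale_zero_left [simp]: "cscale 0 (x::'a::chilbert_space) = 0"
  using cscale_of_real[of 0 x] by simp

lemma cscale_minus_left: "cscale (- c) (x::'a::chilbert_space) = - cscale c x"
  using cscale_cscale[of "-1" c x] cscale_of_real[of "-1"]
  by (metis mult_minus1 of_real_1 of_real_minus scaleR_minus1_left)

lemma linear_shift_op: "bounded_clinear S \<Longrightarrow> linear (shift_op S l)"
  unfolding shift_op_def bounded_clinear_def
  by (intro linear_compose_sub bounded_linear.linear linear_cscale) simp_all

lemma shift_op_cscale_commute:
  "bounded_clinear S \<Longrightarrow> shift_op S l (cscale c x) = cscale c (shift_op S l x)"
  unfolding shift_op_def bounded_clinear_def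
  by (simp add: linear_diff[OF linear_cscale] cscale_cscale mult.commute)

lemma koszul_exact3_invertible_third:
  fixes A B C D :: "'a::chilbert_space \<Rightarrow> 'a"
  assumes "linear A" "linear B" "linear D"
    and CD: "\<And>x. C (D x) = x" and DC: "\<And>x. D (C x) = x"
    and AD: "\<And>x. A (D x) = D (A x)" and BD: "\<And>x. B (D x) = D (B x)"
  shows "koszul_exact3 A B C"
  unfolding koszul_exact3_def
proof (intro conjI allI impI)
  fix x assume "A x = 0 \<and> B x = 0 \<and> C x = 0"
  then show "x = 0" using DC[of x] linear_0[OF \<open>linear D\<close>] by simp
next
  fix x y z assume h: "B x - A y = 0 \<and> C x - A z = 0 \<and> C y - B z = 0"
  then have "x = A (D z)" "y = B (D z)" by (metis AD BD DC eq_iff_diff_eq_0)+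
  then show "\<exists>u. x = A u \<and> y = B u \<and> z = C u" using CD by metis
next
  fix u v w assume "C u - B v + A w = 0"
  then have "B v - A w = C u" by (simp add: algebra_simps)
  then have "u = D (B v - A w)" by (simp add: DC)
  then have "u = B (D v) - A (D w)" by (simp add: AD BD linear_diff[OF \<open>linear D\<close>])
  moreover have "v = C (D v) - A 0" "w = C (D w) - B 0"
    by (simp_all add: CD linear_0[OF \<open>linear A\<close>] linear_0[OF \<open>linear B\<close>])
  ultimately show "\<exists>x y z. u = B x - A y \<and> v = C x - A z \<and> w = C y - B z" by blast
next
  fix h
  have "C (D h) - B 0 + A 0 = h"
    by (simp add: CD linear_0[OF \<open>linear A\<close>] linear_0[OF \<open>linear B\<close>])
  then show "\<exists>u v w. C u - B v + A w = h" by blast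
qed

lemma koszul_exact3_zero_third:
  fixes A B :: "'a::chilbert_space \<Rightarrow> 'a"
  assumes "linear A" "linear B" and exact: "koszul_exact2 A B"
  shows "koszul_exact3 A B (\<lambda>_. 0)"
proof -
  have minus: "A (- x) = - A x" "B (- x) = - B x" for x
    using linear_neg[OF \<open>linear A\<close>] linear_neg[OF \<open>linear B\<close>] by simp_all
  have inj: "\<And>x. A x = 0 \<Longrightarrow> B x = 0 \<Longrightarrow> x = 0"
    and cycle: "\<And>x y. B x - A y = 0 \<Longrightarrow> \<exists>u. x = A u \<and> y = B u"
    and onto: "\<And>z. \<exists>x y. B x - A y = z"
    using exact unfolding koszul_exact2_def by blast+
  show ?thesis
    unfolding koszul_exact3_def
  proof (intro conjI allI impI)
    fix x :: 'a assume "A x = 0 \<and> B x = 0 \<and> (0::'a) = 0"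
    then show "x = 0" using inj by blast
  next
    fix x y z :: 'a assume "B x - A y = 0 \<and> 0 - A z = 0 \<and> 0 - B z = 0"
    then show "\<exists>u. x = A u \<and> y = B u \<and> z = 0" using inj cycle by fastforce
  next
    fix u v w :: 'a assume "0 - B v + A w = 0"
    then have "B (- v) - A (- w) = 0" by (simp add: minus algebra_simps)
    then obtain t where "- v = A t" "- w = B t" using cycle by blast
    then have "v = 0 - A t" "w = 0 - B t" by (metis minus_minus diff_0)+
    moreover obtain x y where "u = B x - A y" using onto by metis
    ultimately show "\<exists>x y z. u = B x - A y \<and> v = 0 - A z \<and> w = 0 - B z" by blast
  next
    fix h :: 'a
    obtain x y where "h = B x - A y" using onto by metis
    then have "0 - B (- x) + A (- y) = h" by (simp add: minus)
    then show "\<exists>u v w. 0 - B v + A w = h" by blast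
  qed
qed

lemma taylor_spectrum3_zero_third:
  fixes S P :: "'a::chilbert_space \<Rightarrow> 'a"
  assumes S: "bounded_clinear S" and P: "bounded_clinear P"
  shows "taylor_spectrum3 S P (\<lambda>_. 0) \<subseteq> (\<lambda>(a, b). (a, b, 0)) ` taylor_spectrum2 S P"
proof
  fix l assume "l \<in> taylor_spectrum3 S P (\<lambda>_. 0)"
  then obtain l1 l2 l3 where l: "l = (l1, l2, l3)"
    and not_exact: "\<not> koszul_exact3 (shift_op S l1) (shift_op P l2) (shift_op (\<lambda>_. 0) l3)"
    unfolding taylor_spectrum3_def by auto
  have shift_zero: "shift_op (\<lambda>_. 0) l3 = cscale (- l3)"
    by (simp add: shift_op_def fun_eq_iff cscale_minus_left)
  have "l3 = 0 \<and> \<not> koszul_exact2 (shift_op S l1) (shift_op P l2)"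
  proof (cases "l3 = 0")
    case True
    then have "shift_op (\<lambda>_::'a. 0) l3 = (\<lambda>_. 0)"
      by (simp add: shift_op_def)
    then show ?thesis
      using True not_exact koszul_exact3_zero_third linear_shift_op S P by metis
  next
    case False
    \<comment> \<open>\<open>0 - l\<^sub>3\<close> is invertible with inverse \<open>cscale (- inverse l\<^sub>3)\<close>, which commutes with
      every complex-linear operator\<close>
    have "koszul_exact3 (shift_op S l1) (shift_op P l2) (shift_op (\<lambda>_. 0) l3)"
      unfolding shift_zero
      by (rule koszul_exact3_invertible_third[where D = "cscale (- inverse l3)"])
        (use False in \<open>simp_all add: linear_shift_op S P linear_cscale cscale_cscale
          shift_op_cscale_commute\<close>)
    with not_exact show ?thesis by contradiction
  qed
  with l show "l \<in> (\<lambda>(a, b). (a, b, 0)) ` taylor_spectrum2 S P"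
    unfolding taylor_spectrum2_def by force
qed

lemma Gamma3_of_Gamma2: "(a, b) \<in> Gamma2 \<Longrightarrow> (a, b, 0) \<in> Gamma3"
  unfolding Gamma2_def Gamma3_def by force

definition lift_index :: "nat \<times> nat \<Rightarrow> nat \<times> nat \<times> nat" where
  "lift_index k = (fst k, snd k, 0)"

lemma inj_lift_index: "inj lift_index"
  unfolding lift_index_def inj_def by auto

lemma finite_support_lift_index:
  "finite {k. c k \<noteq> 0} \<Longrightarrow> finite {k. (c \<circ> lift_index) k \<noteq> 0}"
  using finite_vimageI[OF _ inj_lift_index, of "{k. c k \<noteq> 0}"] by (simp add: vimage_def)

lemma sum_support_lift_index:
  fixes f :: "nat \<times> nat \<times> nat \<Rightarrow> 'b::comm_monoid_add"
  assumes fin: "finite {k. c k \<noteq> 0}" and vanish: "\<And>k. snd (snd k) \<noteq> 0 \<Longrightarrow> f k = 0"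
  shows "(\<Sum>k\<in>{k. c k \<noteq> 0}. f k) = (\<Sum>k\<in>{k. (c \<circ> lift_index) k \<noteq> 0}. f (lift_index k))"
proof -
  have "(\<Sum>k\<in>{k. c k \<noteq> 0}. f k) = (\<Sum>k\<in>{k. c k \<noteq> 0} \<inter> {k. snd (snd k) = 0}. f k)"
    by (rule sum.mono_neutral_right[OF fin]) (auto intro: vanish)
  also have "{k. c k \<noteq> 0} \<inter> {k. snd (snd k) = 0} = lift_index ` {k. (c \<circ> lift_index) k \<noteq> 0}"
    by (auto simp: lift_index_def image_iff)
  also have "sum f \<dots> = (\<Sum>k\<in>{k. (c \<circ> lift_index) k \<noteq> 0}. f (lift_index k))"
    by (rule sum.reindex[OF inj_on_subset[OF inj_lift_index subset_UNIV], unfolded comp_def])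
  finally show ?thesis .
qed

lemma poly3_zero_third:
  "finite {k. c k \<noteq> 0} \<Longrightarrow> poly3 c (a, b, 0) = poly2 (c \<circ> lift_index) (a, b)"
  unfolding poly3_def poly2_def
  by (subst sum_support_lift_index) (auto simp: lift_index_def)

lemma funpow_linear_0: "linear (A :: 'a::real_vector \<Rightarrow> 'a) \<Longrightarrow> (A ^^ n) 0 = 0"
  by (induction n) (simp_all add: linear_0)

lemma opoly3_zero_third:
  fixes S P :: "'a::chilbert_space \<Rightarrow> 'a"
  assumes "linear S" "linear P" "finite {k. c k \<noteq> 0}"
  shows "opoly3 c S P (\<lambda>_. 0) = opoly2 (c \<circ> lift_index) S P"
proof
  have zero_pow: "((\<lambda>_::'a. 0::'a) ^^ n) x = 0" if "n \<noteq> 0" for n and x :: 'a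
    using that by (cases n) simp_all
  show "opoly3 c S P (\<lambda>_. 0) x = opoly2 (c \<circ> lift_index) S P x" for x
    unfolding opoly3_def opoly2_def
    by (subst sum_support_lift_index[OF assms(3)])
      (auto simp: zero_pow funpow_linear_0 assms linear_0[OF linear_cscale] lift_index_def)
qed

lemma Gamma3_eq_image:
  "Gamma3 = (\<lambda>(z1, z2, z3). (z1 + z2 + z3, z1 * z2 + z2 * z3 + z3 * z1, z1 * z2 * z3))
     ` (cball 0 1 \<times> cball 0 1 \<times> cball 0 1)"
  unfolding Gamma3_def by (auto simp: image_iff) (metis mem_cball_0, metis)

lemma compact_Gamma3: "compact Gamma3"
  unfolding Gamma3_eq_image case_prod_beta
  by (intro compact_continuous_image compact_Times compact_cball continuous_intros)

lemma continuous_on_poly3: "continuous_on A (poly3 c)"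
  unfolding poly3_def by (intro continuous_intros)

lemma bdd_above_cmod_divide_compact:
  fixes f g :: "'a::topological_space \<Rightarrow> complex"
  assumes "compact K" "continuous_on K f" "continuous_on K g" "\<forall>z\<in>K. g z \<noteq> 0"
  shows "bdd_above ((\<lambda>z. cmod (f z / g z)) ` K)"
  using assms
  by (intro bounded_imp_bdd_above compact_imp_bounded compact_continuous_image continuous_intros)
    auto

lemma poly2_lift_index_nonzero_Gamma2:
  assumes "finite {k. q k \<noteq> 0}" "\<forall>z\<in>Gamma3. poly3 q z \<noteq> 0"
  shows "\<forall>z\<in>Gamma2. poly2 (q \<circ> lift_index) z \<noteq> 0"
  using assms Gamma3_of_Gamma2 by (auto simp flip: poly3_zero_third)

lemma SUP_Gamma2_le_SUP_Gamma3:
  assumes "finite {k. p k \<noteq> 0}" "finite {k. q k \<noteq> 0}" "\<forall>z\<in>Gamma3. poly3 q z \<noteq> 0"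
  shows "(SUP z\<in>Gamma2. cmod (poly2 (p \<circ> lift_index) z / poly2 (q \<circ> lift_index) z))
    \<le> (SUP z\<in>Gamma3. cmod (poly3 p z / poly3 q z))"
proof (rule cSUP_mono)
  have "(0, 0) \<in> Gamma2"
    unfolding Gamma2_def by (intro CollectI exI[of _ 0]) simp
  then show "Gamma2 \<noteq> {}" by blast
  show "bdd_above ((\<lambda>z. cmod (poly3 p z / poly3 q z)) ` Gamma3)"
    using assms(3) by (intro bdd_above_cmod_divide_compact compact_Gamma3 continuous_on_poly3)
  fix z assume "z \<in> Gamma2"
  then obtain a b where "z = (a, b)" "(a, b, 0) \<in> Gamma3"
    using Gamma3_of_Gamma2 by (cases z) auto
  then show "\<exists>w\<in>Gamma3. cmod (poly2 (p \<circ> lift_index) z / poly2 (q \<circ> lift_index) z)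
      \<le> cmod (poly3 p w / poly3 q w)"
    using assms by (auto simp flip: poly3_zero_third)
qed

lemma von_neumann_zero_third:
  fixes S P :: "'a::chilbert_space \<Rightarrow> 'a"
  assumes "gamma_contraction S P"
    and p: "finite {k. p k \<noteq> 0}" and q: "finite {k. q k \<noteq> 0}"
    and q_nonzero: "\<forall>z\<in>Gamma3. poly3 q z \<noteq> 0"
    and "R \<circ> opoly3 q S P (\<lambda>_. 0) = id" "opoly3 q S P (\<lambda>_. 0) \<circ> R = id"
  shows "onorm (opoly3 p S P (\<lambda>_. 0) \<circ> R) \<le> (SUP z\<in>Gamma3. cmod (poly3 p z / poly3 q z))"
proof -
  have von_neumann: "\<And>p q R. finite {k. p k \<noteq> 0} \<Longrightarrow> finite {k. q k \<noteq> 0} \<Longrightarrow>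
      \<forall>z\<in>Gamma2. poly2 q z \<noteq> 0 \<Longrightarrow> R \<circ> opoly2 q S P = id \<Longrightarrow> opoly2 q S P \<circ> R = id \<Longrightarrow>
      onorm (opoly2 p S P \<circ> R) \<le> (SUP z\<in>Gamma2. cmod (poly2 p z / poly2 q z))"
    and "linear S" "linear P"
    using assms(1) unfolding gamma_contraction_def bounded_clinear_def
    by (blast dest: bounded_linear.linear)+
  then have opoly3_eq: "opoly3 c S P (\<lambda>_. 0) = opoly2 (c \<circ> lift_index) S P"
    if "finite {k. c k \<noteq> 0}" for c
    using that by (intro opoly3_zero_third)
  have "onorm (opoly2 (p \<circ> lift_index) S P \<circ> R)
      \<le> (SUP z\<in>Gamma2. cmod (poly2 (p \<circ> lift_index) z / poly2 (q \<circ> lift_index) z))"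
    using assms(5,6) unfolding opoly3_eq[OF q]
    by (intro von_neumann finite_support_lift_index p q poly2_lift_index_nonzero_Gamma2 q_nonzero)
  also have "\<dots> \<le> (SUP z\<in>Gamma3. cmod (poly3 p z / poly3 q z))"
    using p q q_nonzero by (rule SUP_Gamma2_le_SUP_Gamma3)
  finally show ?thesis
    unfolding opoly3_eq[OF p] .
qed

theorem lemma10p3:
  fixes S P :: "'a::chilbert_space \<Rightarrow> 'a"
  assumes "gamma_contraction S P"
  shows "gamma3_contraction S P (\<lambda>_. 0)"
proof -
  have S: "bounded_clinear S" and P: "bounded_clinear P" and commute: "S \<circ> P = P \<circ> S"
    and spectrum: "taylor_spectrum2 S P \<subseteq> Gamma2"
    using assms unfolding gamma_contraction_def by blast+
  have "bounded_clinear (\<lambda>_::'a. 0::'a)"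
    by (simp add: bounded_clinear_def linear_0[OF linear_cscale])
  moreover have "taylor_spectrum3 S P (\<lambda>_. 0) \<subseteq> Gamma3"
    using taylor_spectrum3_zero_third[OF S P] spectrum Gamma3_of_Gamma2 by fastforce
  moreover have "S 0 = 0" "P 0 = 0"
    using S P unfolding bounded_clinear_def by (simp_all add: linear_simps)
  ultimately show ?thesis
    unfolding gamma3_contraction_def
    using S P commute von_neumann_zero_third[OF assms] by (simp add: fun_eq_iff)
qed

end
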